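(* For $n\ge3$ let $C_n$ be the cycle graph with $n$ vertices and let $\mathbb{Z}$ be the one-dimensional integer lattice (the 2-regular graph on $\mathbb{Z}$ with edges $\{k,k+1\}$). Let $\mu$ be the probability measure on $[0,4]$ that is the image of the normalized Lebesgue measure $\frac{dx}{2\pi}$ on $[0,2\pi)$ under the map $x\mapsto 2(1-\cos x)$ (the spectral measure of the Laplacian of $\mathbb{Z}$). Then for every complex $u$ with $|u|<1$, \[ \lim_{n\to\infty}\zeta_{C_n}(u)^{-1}=\zeta_{\mathbb{Z}}(u)^{-1}=\exp\Big(\int\log(1-2u+u^2+\lambda u)\,d\mu(\lambda)\Big), \] where $\log$ is the principal branch.
   Context: For a vertex transitive $(q+1)$-regular graph $G$ and a fixed vertex $x_0$, the generalized Ihara zeta function is $\zeta_G(u)=\exp\big(\sum_{m\ge1}\frac{N^0_m}{m}u^m\big)$, where $N^0_m$ is the number of reduced $x_0$-cycles of length $m$ in $G$. Here a path of length $m$ is a sequence $(e_1,\ldots,e_m)$ of oriented edges with the terminus of $e_i$ equal to the origin of $e_{i+1}$; it has a backtracking if $e_{i+1}=e_i^{-1}$ for some $i$ (the reversed arc); an $x_0$-cycle is a path starting and ending at $x_0$; it has a tail if $e_m=e_1^{-1}$; it is reduced if it has neither a backtracking nor a tail. *)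

theory Defs
  imports "HOL-Analysis.Analysis"
begin

text \<open>Since the graphs
considered are simple, an oriented edge is an ordered pair of adjacent vertices and a
path of length m is encoded by its vertex list v_0, ..., v_m (length m+1).\<close>

definition reduced_cycles :: "('a \<Rightarrow> 'a \<Rightarrow> bool) \<Rightarrow> 'a \<Rightarrow> nat \<Rightarrow> 'a list set" where
  "reduced_cycles adj x0 m =
     {vs. length vs = Suc m \<and> vs ! 0 = x0 \<and> vs ! m = x0
        \<and> (\<forall>i<m. adj (vs ! i) (vs ! Suc i))
        \<comment> \<open>no backtracking: e_(i+1) = e_i^(-1) iff v_(i+1) = v_(i-1)\<close>
        \<and> (\<forall>i. i + 2 \<le> m \<longrightarrow> vs ! (i + 2) \<noteq> vs ! i)
        \<comment> \<open>no tail: e_m = e_1^(-1) iff v_(m-1) = v_1 (given v_m = v_0 = x0)\<close>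
        \<and> \<not> (vs ! (m - 1) = vs ! 1)}"

definition num_reduced_cycles :: "('a \<Rightarrow> 'a \<Rightarrow> bool) \<Rightarrow> 'a \<Rightarrow> nat \<Rightarrow> nat" where
  "num_reduced_cycles adj x0 m = card (reduced_cycles adj x0 m)"

definition ihara_zeta :: "('a \<Rightarrow> 'a \<Rightarrow> bool) \<Rightarrow> 'a \<Rightarrow> complex \<Rightarrow> complex" where
  "ihara_zeta adj x0 u =
     exp (\<Sum>m. of_nat (num_reduced_cycles adj x0 (Suc m)) / of_nat (Suc m) * u ^ Suc m)"

definition cycle_adj :: "nat \<Rightarrow> nat \<Rightarrow> nat \<Rightarrow> bool" where
  "cycle_adj n a b \<longleftrightarrow> a < n \<and> b < n \<and> (b = (a + 1) mod n \<or> a = (b + 1) mod n)"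

definition int_adj :: "int \<Rightarrow> int \<Rightarrow> bool" where
  "int_adj a b \<longleftrightarrow> \<bar>a - b\<bar> = 1"

definition spectral_measure_Z :: "real measure" where
  "spectral_measure_Z = distr (uniform_measure lborel {0..<2*pi}) borel (\<lambda>x. 2 * (1 - cos x))"

end

theory Submission
  imports Defs "HOL-Probability.Probability_Measure" "HOL-Complex_Analysis.Cauchy_Integral_Theorem"
begin

(* Every edge of C_n and of Z joins a vertex to its image under an injective map f (rotation,
   resp. translation by one). A walk without backtracking in such a graph can never reverse its
   direction, so a reduced x0-cycle of length m is an f-orbit traversed forwards or backwards:
   there are at most two of them, and they exist only if f^m x0 = x0. Hence Z has no reduced
   cycles and zeta_Z = 1, while C_n has at most two reduced cycles of each length and none of
   length below n, so zeta_{C_n}(u) tends to 1 by Tannery's theorem. On the spectral side,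
   1 - 2u cos x + u^2 = (1 - u e^{ix}) (1 - u e^{-ix}), so its logarithm is the Fourier series
   - sum_k 2 u^k cos (k x) / k, whose integral over a period vanishes term by term. *)

locale successor_graph =
  fixes adj :: "'a \<Rightarrow> 'a \<Rightarrow> bool" and A :: "'a set" and f :: "'a \<Rightarrow> 'a"
  assumes adj_succ: "adj a b \<Longrightarrow> a \<in> A \<and> b \<in> A \<and> (b = f a \<or> a = f b)"
    and inj: "inj_on f A"
begin

lemma reduced_cycle_direction:
  assumes vs: "vs \<in> reduced_cycles adj x0 m"
  shows "(\<forall>i<m. vs ! Suc i = f (vs ! i)) \<or> (\<forall>i<m. vs ! i = f (vs ! Suc i))"
proof -
  have step: "vs ! i \<in> A \<and> vs ! Suc i \<in> A
      \<and> (vs ! Suc i = f (vs ! i) \<or> vs ! i = f (vs ! Suc i))"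
    if "i < m" for i
    using vs that adj_succ unfolding reduced_cycles_def by blast
  have no_backtrack: "vs ! Suc (Suc i) \<noteq> vs ! i" if "Suc i < m" for i
    using vs that unfolding reduced_cycles_def by (auto simp: numeral_2_eq_2)
  have forward_stays: "vs ! Suc (Suc i) = f (vs ! Suc i)"
    if "Suc i < m" "vs ! Suc i = f (vs ! i)" for i
    using step[of i] step[of "Suc i"] no_backtrack[of i] that inj_onD[OF inj] by force
  have backward_stays: "vs ! Suc i = f (vs ! Suc (Suc i))"
    if "Suc i < m" "vs ! i = f (vs ! Suc i)" for i
    using step[of "Suc i"] no_backtrack[of i] that by force
  show ?thesis
  proof (cases "m = 0 \<or> vs ! 1 = f (vs ! 0)")
    case True
    have "i < m \<Longrightarrow> vs ! Suc i = f (vs ! i)" for i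
      by (induction i) (use True forward_stays in auto)
    then show ?thesis by blast
  next
    case False
    then have "vs ! 0 = f (vs ! 1)" using step[of 0] by auto
    then have "i < m \<Longrightarrow> vs ! i = f (vs ! Suc i)" for i
      by (induction i) (use backward_stays in auto)
    then show ?thesis by blast
  qed
qed

lemma reduced_cycle_eq_orbit:
  assumes vs: "vs \<in> reduced_cycles adj x0 m"
  shows "vs = map (\<lambda>i. (f ^^ i) x0) [0..<Suc m]
       \<or> vs = map (\<lambda>i. (f ^^ (m - i)) x0) [0..<Suc m]"
proof -
  have len: "length vs = Suc m" and ends: "vs ! 0 = x0" "vs ! m = x0"
    using vs unfolding reduced_cycles_def by auto
  from reduced_cycle_direction[OF vs] show ?thesis
  proof
    assume fwd: "\<forall>i<m. vs ! Suc i = f (vs ! i)"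
    have "i \<le> m \<Longrightarrow> vs ! i = (f ^^ i) x0" for i
      by (induction i) (use fwd ends in auto)
    then show ?thesis
      by (intro disjI1 nth_equalityI) (auto simp: len simp del: upt_Suc)
  next
    assume bwd: "\<forall>i<m. vs ! i = f (vs ! Suc i)"
    have "j \<le> m \<Longrightarrow> vs ! (m - j) = (f ^^ j) x0" for j
    proof (induction j)
      case (Suc j)
      then have "vs ! (m - Suc j) = f (vs ! Suc (m - Suc j))" using bwd by simp
      also have "Suc (m - Suc j) = m - j" using Suc.prems by simp
      finally show ?case using Suc by simp
    qed (use ends in simp)
    then have "i \<le> m \<Longrightarrow> vs ! i = (f ^^ (m - i)) x0" for i
      by (metis diff_diff_cancel diff_le_self)
    then show ?thesis
      by (intro disjI2 nth_equalityI) (auto simp: len simp del: upt_Suc)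
  qed
qed

lemma reduced_cycle_funpow_fixed:
  assumes vs: "vs \<in> reduced_cycles adj x0 m"
  shows "(f ^^ m) x0 = x0"
proof -
  have ends: "vs ! 0 = x0" "vs ! m = x0"
    using vs unfolding reduced_cycles_def by auto
  have nth_orbit: "map g [0..<Suc m] ! i = g i" if "i \<le> m" for g :: "nat \<Rightarrow> 'a" and i
    using that by (simp del: upt_Suc)
  from reduced_cycle_eq_orbit[OF vs] show ?thesis
  proof
    assume "vs = map (\<lambda>i. (f ^^ i) x0) [0..<Suc m]"
    then have "vs ! m = (f ^^ m) x0"
      using nth_orbit by (simp del: upt_Suc)
    then show ?thesis using ends by simp
  next
    assume "vs = map (\<lambda>i. (f ^^ (m - i)) x0) [0..<Suc m]"
    then have "vs ! 0 = (f ^^ m) x0"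
      using nth_orbit by (simp del: upt_Suc)
    then show ?thesis using ends by simp
  qed
qed

lemma num_reduced_cycles_le_2:
  shows "num_reduced_cycles adj x0 m \<le> 2"
proof -
  let ?orbits =
    "{map (\<lambda>i. (f ^^ i) x0) [0..<Suc m], map (\<lambda>i. (f ^^ (m - i)) x0) [0..<Suc m]}"
  have "reduced_cycles adj x0 m \<subseteq> ?orbits"
    using reduced_cycle_eq_orbit by blast
  then have "card (reduced_cycles adj x0 m) \<le> card ?orbits"
    by (intro card_mono) auto
  also have "\<dots> \<le> 2"
    by (simp add: card_insert_le_m1)
  finally show ?thesis
    unfolding num_reduced_cycles_def .
qed

end

lemma successor_graph_int_adj: "successor_graph int_adj UNIV (\<lambda>a. a + 1)"
  by unfold_locales (auto simp: int_adj_def)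

lemma successor_graph_cycle_adj: "successor_graph (cycle_adj n) {..<n} (\<lambda>a. Suc a mod n)"
  by unfold_locales (auto simp: cycle_adj_def inj_on_def mod_Suc)

lemma reduced_cycles_int_adj_empty:
  assumes "0 < m"
  shows "reduced_cycles int_adj 0 m = {}"
proof (rule equals0I)
  fix vs
  assume "vs \<in> reduced_cycles int_adj 0 m"
  then have "((\<lambda>a. a + 1) ^^ m) 0 = (0::int)"
    by (rule successor_graph.reduced_cycle_funpow_fixed[OF successor_graph_int_adj])
  moreover have "((\<lambda>a. a + 1) ^^ m) (0::int) = int m"
    by (induction m) simp_all
  ultimately show False
    using assms by simp
qed

lemma reduced_cycles_cycle_adj_empty:
  assumes "m mod n \<noteq> 0"
  shows "reduced_cycles (cycle_adj n) 0 m = {}"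
proof (rule equals0I)
  fix vs
  assume "vs \<in> reduced_cycles (cycle_adj n) 0 m"
  then have "((\<lambda>a. Suc a mod n) ^^ m) 0 = 0"
    by (rule successor_graph.reduced_cycle_funpow_fixed[OF successor_graph_cycle_adj])
  moreover have "((\<lambda>a. Suc a mod n) ^^ m) 0 = m mod n"
    by (induction m) (simp_all add: mod_Suc_eq)
  ultimately show False
    using assms by simp
qed

lemma num_reduced_cycles_cycle_adj_eq_int_adj:
  assumes "0 < m" "m < n"
  shows "num_reduced_cycles (cycle_adj n) 0 m = num_reduced_cycles int_adj 0 m"
  using assms reduced_cycles_cycle_adj_empty[of m n] reduced_cycles_int_adj_empty[of m]
  by (simp add: num_reduced_cycles_def)

lemma ihara_zeta_int_adj: "ihara_zeta int_adj 0 u = 1"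
  using reduced_cycles_int_adj_empty by (simp add: ihara_zeta_def num_reduced_cycles_def)

lemma ihara_zeta_tendsto:
  fixes G :: "nat \<Rightarrow> 'a \<Rightarrow> 'a \<Rightarrow> bool" and x :: "nat \<Rightarrow> 'a"
    and H :: "'b \<Rightarrow> 'b \<Rightarrow> bool" and y :: 'b and u :: complex
  assumes u: "norm u < 1"
    and bounded: "\<And>n m. 0 < m \<Longrightarrow> num_reduced_cycles (G n) (x n) m \<le> C"
    and counts_agree: "\<And>m. 0 < m \<Longrightarrow>
      eventually (\<lambda>n. num_reduced_cycles (G n) (x n) m = num_reduced_cycles H y m) sequentially"
  shows "(\<lambda>n. ihara_zeta (G n) (x n) u) \<longlonglongrightarrow> ihara_zeta H y u"
proof -
  define a where
    "a k n = of_nat (num_reduced_cycles (G n) (x n) (Suc k)) / of_nat (Suc k) * u ^ Suc k" for k n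
  define b where "b k = of_nat (num_reduced_cycles H y (Suc k)) / of_nat (Suc k) * u ^ Suc k" for k
  have "(\<lambda>n. \<Sum>k. a k n) \<longlonglongrightarrow> (\<Sum>k. b k)"
  proof (rule tannerys_theorem[THEN conjunct2, THEN conjunct2])
    show "(\<lambda>n. a k n) \<longlonglongrightarrow> b k" for k
      by (rule tendsto_eventually)
         (use counts_agree[of "Suc k"] in \<open>auto simp: a_def b_def elim: eventually_mono\<close>)
    have "norm (a k n) \<le> real C * norm u ^ Suc k" for k n
    proof -
      have "norm (a k n)
          = real (num_reduced_cycles (G n) (x n) (Suc k)) / real (Suc k) * norm u ^ Suc k"
        unfolding a_def by (simp add: norm_mult norm_divide norm_power del: of_nat_Suc)
      also have "\<dots> \<le> real C / 1 * norm u ^ Suc k"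
        by (intro mult_right_mono frac_le) (use bounded[of "Suc k" n] in auto)
      finally show ?thesis by simp
    qed
    then show "eventually (\<lambda>(k, n). norm (a k n) \<le> real C * norm u ^ Suc k)
        (at_top \<times>\<^sub>F sequentially)"
      by (simp add: always_eventually)
    show "summable (\<lambda>k. real C * norm u ^ Suc k)"
      using u by (intro summable_mult summable_Suc_iff[THEN iffD2]) simp
  qed simp
  then show ?thesis
    unfolding ihara_zeta_def a_def b_def by (rule tendsto_exp)
qed

lemma Re_one_minus_mult_cis_pos:
  fixes u :: complex
  assumes "norm u < 1"
  shows "0 < Re (1 - u * cis x)"
  using complex_Re_le_cmod[of "u * cis x"] assms by (simp add: norm_mult)

lemma Ln_quadratic_cos_split:
  fixes u :: complex
  assumes u: "norm u < 1"
  shows "Ln (1 - 2 * u * complex_of_real (cos x) + u ^ 2)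
           = Ln (1 - u * cis x) + Ln (1 - u * cis (- x))"
proof -
  have pos: "0 < Re (1 - u * cis x)" "0 < Re (1 - u * cis (- x))"
    using Re_one_minus_mult_cis_pos[OF u, of x] Re_one_minus_mult_cis_pos[OF u, of "- x"] by auto
  have "1 - 2 * u * complex_of_real (cos x) + u ^ 2 = (1 - u * cis x) * (1 - u * cis (- x))"
    by (simp add: complex_eq_iff algebra_simps power2_eq_square cos_squared_eq)
  also have "Ln \<dots> = Ln (1 - u * cis x) + Ln (1 - u * cis (- x))"
  proof (rule Ln_times_simple)
    show "1 - u * cis x \<noteq> 0" "1 - u * cis (- x) \<noteq> 0"
      using pos by (metis less_irrefl zero_complex.sel(1))+
    show "- pi < Im (Ln (1 - u * cis x)) + Im (Ln (1 - u * cis (- x)))"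
      "Im (Ln (1 - u * cis x)) + Im (Ln (1 - u * cis (- x))) \<le> pi"
      using Re_Ln_pos_lt_imp[OF pos(1)] Re_Ln_pos_lt_imp[OF pos(2)] by linarith+
  qed
  finally show ?thesis .
qed

lemma Ln_quadratic_cos_sums:
  fixes u :: complex
  assumes u: "norm u < 1"
  shows "(\<lambda>n. - 2 * u ^ n / of_nat n * complex_of_real (cos (real n * x)))
           sums Ln (1 - 2 * u * complex_of_real (cos x) + u ^ 2)"
proof -
  have Ln_sums: "(\<lambda>n. - ((u * cis t) ^ n) / of_nat n) sums Ln (1 - u * cis t)" for t
    using Ln_series'[of "- (u * cis t)"] u by (simp add: norm_mult)
  have cis_pair: "cis t + cis (- t) = 2 * complex_of_real (cos t)" for t
    by (simp add: complex_eq_iff)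
  have "- ((u * cis x) ^ n) / of_nat n + - ((u * cis (- x)) ^ n) / of_nat n
      = - 2 * u ^ n / of_nat n * complex_of_real (cos (real n * x))" for n
  proof -
    have "- ((u * cis x) ^ n) / of_nat n + - ((u * cis (- x)) ^ n) / of_nat n
        = - (u ^ n * (cis (real n * x) + cis (- (real n * x)))) / of_nat n"
      by (simp only: power_mult_distrib Complex.DeMoivre mult_minus_right)
         (simp add: algebra_simps add_divide_distrib diff_divide_distrib)
    then show ?thesis
      unfolding cis_pair by simp
  qed
  then show ?thesis
    using sums_add[OF Ln_sums[of x] Ln_sums[of "- x"]] Ln_quadratic_cos_split[OF u] by simp
qed

lemma integral_uniform_measure_interval:
  fixes f :: "real \<Rightarrow> real"
  assumes ab: "a < b" and f[measurable]: "f \<in> borel_measurable borel"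
  shows "integral\<^sup>L (uniform_measure lborel {a..<b}) f = (LBINT x=a..b. f x) / (b - a)"
proof -
  have "uniform_measure lborel {a..<b}
      = density lborel (\<lambda>x. ennreal (indicator {a..<b} x / (b - a)))"
    unfolding uniform_measure_def using ab
    by (intro density_cong)
       (auto simp: divide_ennreal ennreal_indicator[symmetric] simp del: ennreal_indicator)
  then have "integral\<^sup>L (uniform_measure lborel {a..<b}) f
      = integral\<^sup>L lborel (\<lambda>x. (indicator {a..<b} x / (b - a)) *\<^sub>R f x)"
    using ab by (simp add: integral_density)
  also have "\<dots> = (LBINT x:{a..<b}. f x) / (b - a)"
    by (simp add: set_lebesgue_integral_def field_simps)
  also have "\<dots> = (LBINT x=a..b. f x) / (b - a)"
    using interval_integral_Ico[of a b f] ab by simp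
  finally show ?thesis .
qed

lemma integral_uniform_cos_multiple:
  assumes n: "0 < n"
  shows "integral\<^sup>L (uniform_measure lborel {0..<2*pi}) (\<lambda>x. cos (real n * x)) = 0"
proof -
  have "(LBINT x=ereal 0..ereal (2*pi). cos (real n * x))
      = sin (real n * (2*pi)) / real n - sin (real n * 0) / real n"
  proof (rule interval_integral_FTC_finite)
    show "continuous_on {min 0 (2 * pi)..max 0 (2 * pi)} (\<lambda>x. cos (real n * x))"
      by (intro continuous_intros)
    fix x
    have "((\<lambda>x. sin (real n * x) / real n) has_real_derivative cos (real n * x)) (at x)"
      using n by (auto intro!: derivative_eq_intros)
    then show "((\<lambda>x. sin (real n * x) / real n) has_vector_derivative cos (real n * x))
       (at x within {min 0 (2 * pi)..max 0 (2 * pi)})"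
      by (simp add: has_real_derivative_iff_has_vector_derivative has_vector_derivative_at_within)
  qed
  also have "\<dots> = 0"
    using sin_npi[of "2 * n"] by (simp add: mult.assoc mult.left_commute)
  finally show ?thesis
    by (subst integral_uniform_measure_interval) auto
qed

lemma integral_Ln_quadratic_cos:
  fixes u :: complex
  assumes u: "norm u < 1"
  shows "integral\<^sup>L (uniform_measure lborel {0..<2*pi})
           (\<lambda>x. Ln (1 - 2 * u * complex_of_real (cos x) + u ^ 2)) = 0"
proof -
  define M where "M = uniform_measure lborel {0..<2*pi}"
  interpret prob_space M
    unfolding M_def by (rule prob_space_uniform_measure) auto
  define fourier_term where
    "fourier_term n x = - 2 * u ^ n / of_nat n * complex_of_real (cos (real n * x))" for n x
  have fourier_term_bound: "norm (fourier_term n x) \<le> 2 * norm u ^ n" for n x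
  proof (cases "n = 0")
    case False
    have "norm (fourier_term n x) = 2 * norm u ^ n / real n * \<bar>cos (real n * x)\<bar>"
      unfolding fourier_term_def by (simp add: norm_mult norm_divide norm_power)
    also have "\<dots> \<le> 2 * norm u ^ n / 1 * 1"
      by (intro mult_mono divide_left_mono) (use False in auto)
    finally show ?thesis by simp
  qed (simp add: fourier_term_def)
  have "fourier_term n \<in> borel_measurable M" for n
    unfolding fourier_term_def M_def by measurable
  then have fourier_term_integrable: "integrable M (fourier_term n)" for n
    by (intro integrable_const_bound[of _ "2 * norm u ^ n"]) (simp_all add: fourier_term_bound)
  have geometric: "summable (\<lambda>n. 2 * norm u ^ n)"
    using u by (intro summable_mult) (simp add: summable_geometric)
  have "integral\<^sup>L M (\<lambda>x. Ln (1 - 2 * u * complex_of_real (cos x) + u ^ 2))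
      = integral\<^sup>L M (\<lambda>x. \<Sum>n. fourier_term n x)"
    using Ln_quadratic_cos_sums[OF u] by (simp add: fourier_term_def sums_iff)
  also have "\<dots> = (\<Sum>n. integral\<^sup>L M (fourier_term n))"
  proof (rule integral_suminf[OF fourier_term_integrable])
    show "AE x in M. summable (\<lambda>n. norm (fourier_term n x))"
      by (intro AE_I2 summable_comparison_test'[OF geometric]) (simp add: fourier_term_bound)
    have "norm (\<integral>x. norm (fourier_term n x) \<partial>M) \<le> 2 * norm u ^ n" for n
      using integral_le_const[of "\<lambda>x. norm (fourier_term n x)"] fourier_term_integrable
        fourier_term_bound by simp
    then show "summable (\<lambda>n. \<integral>x. norm (fourier_term n x) \<partial>M)"
      by (rule summable_comparison_test'[OF geometric])
  qed
  also have "\<dots> = 0"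
  proof -
    \<comment> \<open>For \<open>n = 0\<close> the coefficient is \<open>- 2 / 0 = 0\<close>.\<close>
    have "integral\<^sup>L M (fourier_term n) = 0" for n
      using integral_uniform_cos_multiple[of n] unfolding fourier_term_def M_def
      by (cases "n = 0") simp_all
    then show ?thesis by simp
  qed
  finally show ?thesis
    unfolding M_def .
qed

lemma integral_spectral_measure_Z_Ln:
  fixes u :: complex
  assumes u: "norm u < 1"
  shows "integral\<^sup>L spectral_measure_Z (\<lambda>t. Ln (1 - 2 * u + u ^ 2 + complex_of_real t * u)) = 0"
proof -
  have quadratic: "1 - 2 * u + u ^ 2 + complex_of_real (2 * (1 - cos x)) * u
      = 1 - 2 * u * complex_of_real (cos x) + u ^ 2" for x
    by (simp add: algebra_simps)
  have "integral\<^sup>L spectral_measure_Z (\<lambda>t. Ln (1 - 2 * u + u ^ 2 + complex_of_real t * u))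
      = integral\<^sup>L (uniform_measure lborel {0..<2*pi})
          (\<lambda>x. Ln (1 - 2 * u + u ^ 2 + complex_of_real (2 * (1 - cos x)) * u))"
    unfolding spectral_measure_Z_def by (rule integral_distr) measurable
  also have "\<dots> = integral\<^sup>L (uniform_measure lborel {0..<2*pi})
          (\<lambda>x. Ln (1 - 2 * u * complex_of_real (cos x) + u ^ 2))"
    by (simp only: quadratic)
  finally show ?thesis
    using integral_Ln_quadratic_cos[OF u] by simp
qed

theorem corollary2:
  fixes u :: complex
  assumes "norm u < 1"
  shows "(\<lambda>n. inverse (ihara_zeta (cycle_adj (n + 3)) 0 u))
           \<longlonglongrightarrow> inverse (ihara_zeta int_adj 0 u)
         \<and> inverse (ihara_zeta int_adj 0 u)
             = exp (integral\<^sup>L spectral_measure_Z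
                      (\<lambda>t. Ln (1 - 2 * u + u ^ 2 + complex_of_real t * u)))"
proof
  have "(\<lambda>n. ihara_zeta (cycle_adj (n + 3)) 0 u) \<longlonglongrightarrow> ihara_zeta int_adj 0 u"
  proof (rule ihara_zeta_tendsto[OF assms])
    show "num_reduced_cycles (cycle_adj (n + 3)) 0 m \<le> 2" if "0 < m" for n m
      by (rule successor_graph.num_reduced_cycles_le_2[OF successor_graph_cycle_adj])
    show "eventually (\<lambda>n. num_reduced_cycles (cycle_adj (n + 3)) 0 m
        = num_reduced_cycles int_adj 0 m) sequentially" if "0 < m" for m
      using that by (intro eventually_sequentiallyI[of m] num_reduced_cycles_cycle_adj_eq_int_adj) auto
  qed
  then show "(\<lambda>n. inverse (ihara_zeta (cycle_adj (n + 3)) 0 u))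
      \<longlonglongrightarrow> inverse (ihara_zeta int_adj 0 u)"
    by (rule tendsto_inverse) (simp add: ihara_zeta_int_adj)
  show "inverse (ihara_zeta int_adj 0 u) = exp (integral\<^sup>L spectral_measure_Z
      (\<lambda>t. Ln (1 - 2 * u + u ^ 2 + complex_of_real t * u)))"
    by (simp add: ihara_zeta_int_adj integral_spectral_measure_Z_Ln[OF assms])
qed

end
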